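(* Let $n\in\mathbb{N}$ and let $p$ be a prime with $p>3$ and $n>2$. Let $x_1,\dots,x_{p-3}$ be distinct symbols not in $\{1,\dots,n\}$, and regard $A_n$ as the subgroup of $A_{n+(p-3)}=\mathrm{Alt}(\{1,\dots,n,x_1,\dots,x_{p-3}\})$ fixing every $x_i$. If $\sigma\in A_n$, then $\sigma^{-1}$ can be written as a product of $p$-cycles $\sigma^{-1}=\tau_1\tau_2\cdots\tau_t$, where $\tau_i\in A_{n+(p-3)}\setminus A_n$ for all $i=1,\dots,t$, and $\tau_i\notin\langle\tau_j\rangle$ for all $i\neq j$.
   Context: $A_{n+(p-3)}\setminus A_n$ denotes the even permutations of $\{1,\dots,n,x_1,\dots,x_{p-3}\}$ that move at least one of the $x_i$. $\langle\tau\rangle$ denotes the cyclic subgroup generated by $\tau$. (The empty product is the identity.) *)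

theory Defs
  imports "HOL-Combinatorics.Combinatorics" "HOL-Computational_Algebra.Primes"
begin

definition alt :: "'a set \<Rightarrow> ('a \<Rightarrow> 'a) set" where
  "alt S = {\<sigma>. \<sigma> permutes S \<and> evenperm \<sigma>}"

definition is_k_cycle :: "nat \<Rightarrow> ('a \<Rightarrow> 'a) \<Rightarrow> bool" where
  "is_k_cycle k \<tau> \<longleftrightarrow> (\<exists>cs. distinct cs \<and> length cs = k \<and> \<tau> = cycle_of_list cs)"

definition cyc_gen :: "('a \<Rightarrow> 'a) \<Rightarrow> ('a \<Rightarrow> 'a) set" where
  "cyc_gen \<tau> = range (\<lambda>k::nat. \<tau> ^^ k)"

end

theory Submission
  imports Defs
begin

text \<open>
  An even permutation of a finite set is a product of 3-cycles \<open>(a b c)\<close>, and the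
  factors can be chosen with pairwise distinct middle points \<open>b\<close>. With \<open>m = p - 3\<close>
  (even and at least 2) new points \<open>x\<^sub>1, \<dots>, x\<^sub>m\<close>, each factor splits as
  \<open>(a b c) = (a c b x\<^sub>1 \<dots> x\<^sub>m) (a c x\<^sub>m \<dots> x\<^sub>1 b)\<close>, a product of two
  \<open>p\<close>-cycles moving the new points. Every first factor sends \<open>x\<^sub>1\<close> to \<open>x\<^sub>2\<close>
  and every second one sends \<open>x\<^sub>2\<close> to \<open>x\<^sub>1\<close>. A power of a cycle that agrees
  with the cycle at one moved point is the cycle itself, and one that inverts it at a point
  of its support is its inverse; so a factor lying in the cyclic group of another one is
  either equal to it or inverse to it, and the distinct middle points rule out inverses.
\<close>

lemma evenperm_cycle_of_list:
  "distinct cs \<Longrightarrow> evenperm (cycle_of_list cs) \<longleftrightarrow> even (length cs - 1)"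
proof (induction cs rule: cycle_of_list.induct)
  case (1 i j cs)
  have "evenperm (cycle_of_list (i # j # cs))
      \<longleftrightarrow> evenperm (transpose i j) = evenperm (cycle_of_list (j # cs))"
    by (simp add: evenperm_comp permutation_swap_id permutation_of_cycle)
  also have "\<dots> \<longleftrightarrow> even (length (i # j # cs) - 1)"
    using "1" by (simp add: evenperm_swap)
  finally show ?case .
qed simp_all

lemma cycle_of_list_nth:
  assumes "distinct cs" "i < length cs"
  shows "cycle_of_list cs (cs ! i) = cs ! (Suc i mod length cs)"
  using arg_cong[OF cyclic_rotation[OF assms(1), of 1], of "\<lambda>ys. ys ! i"] assms(2)
  by (simp add: nth_rotate1)

lemma cycle_of_list_next:
  "distinct (us @ u # v # ws) \<Longrightarrow> cycle_of_list (us @ u # v # ws) u = v"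
  using cycle_of_list_nth[of "us @ u # v # ws" "length us"] by (simp add: nth_append)

lemma cycle_of_list_last:
  "distinct (u # ws @ [v]) \<Longrightarrow> cycle_of_list (u # ws @ [v]) v = u"
  using cycle_of_list_nth[of "u # ws @ [v]" "Suc (length ws)"] by (simp add: nth_append)

lemma funpow_cycle_of_list_eq_id:
  assumes "distinct cs" "x \<in> set cs" "(cycle_of_list cs ^^ k) x = x"
  shows "cycle_of_list cs ^^ k = id"
proof -
  obtain i where i: "i < length cs" "x = cs ! i"
    using assms(2) by (metis in_set_conv_nth)
  have "cs ! ((k + i) mod length cs) = cs ! i"
    using arg_cong[OF cyclic_rotation[OF assms(1), of k], of "\<lambda>ys. ys ! i"] assms(3) i
    by (simp add: nth_rotate)
  moreover have "0 < length cs"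
    using i(1) by linarith
  ultimately have "(k + i) mod length cs = i mod length cs"
    using nth_eq_iff_index_eq[OF assms(1) mod_less_divisor i(1)] i(1) by simp
  then have "length cs dvd k"
    using mod_eq_dvd_iff_nat[of i "k + i"] by simp
  then obtain q where "k = length cs * q" ..
  then show ?thesis
    using cycle_is_id_root[OF assms(1)] by (simp add: funpow_mult[symmetric])
qed

lemma cyc_gen_cycle_of_list_agree:
  assumes "distinct cs" "\<tau> \<in> cyc_gen (cycle_of_list cs)"
    and "\<tau> x = cycle_of_list cs x" "cycle_of_list cs x \<noteq> x"
  shows "\<tau> = cycle_of_list cs"
proof -
  obtain k where k: "\<tau> = cycle_of_list cs ^^ k"
    using assms(2) by (auto simp: cyc_gen_def)
  have "x \<in> set cs"
    using assms(4) id_outside_supp by fast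
  then have y: "cycle_of_list cs x \<in> set cs"
    using permutes_in_image[OF cycle_permutes] by fast
  show ?thesis
  proof (cases k)
    case 0
    then show ?thesis using k assms(3,4) by simp
  next
    case (Suc j)
    have "(cycle_of_list cs ^^ j) (cycle_of_list cs x) = cycle_of_list cs x"
      using assms(3) unfolding k Suc funpow_Suc_right comp_apply .
    then have "cycle_of_list cs ^^ j = id"
      by (rule funpow_cycle_of_list_eq_id[OF assms(1) y])
    then show ?thesis
      unfolding k Suc funpow_Suc_right by simp
  qed
qed

lemma cyc_gen_cycle_of_list_inverse:
  assumes "distinct cs" "\<tau> \<in> cyc_gen (cycle_of_list cs)"
    and "x \<in> set cs" "cycle_of_list cs (\<tau> x) = x"
  shows "cycle_of_list cs \<circ> \<tau> = id"
proof -
  obtain k where k: "\<tau> = cycle_of_list cs ^^ k"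
    using assms(2) by (auto simp: cyc_gen_def)
  then have "cycle_of_list cs \<circ> \<tau> = cycle_of_list cs ^^ Suc k"
    by simp
  moreover have "(cycle_of_list cs ^^ Suc k) x = x"
    using assms(4) unfolding k by simp
  ultimately show ?thesis
    using funpow_cycle_of_list_eq_id[OF assms(1,3)] by metis
qed

fun three_cycle :: "'a \<times> 'a \<times> 'a \<Rightarrow> 'a \<Rightarrow> 'a" where
  "three_cycle (a, b, c) = cycle_of_list [a, b, c]"

lemma permutes_insert_fixed:
  "\<sigma> permutes insert x F \<Longrightarrow> \<sigma> x = x \<Longrightarrow> \<sigma> permutes F"
  by (rule permutes_superset) auto

text \<open>The point removed in each induction step becomes the middle point of the new 3-cycle,
  which keeps the middle points distinct.\<close>

lemma evenperm_three_cycle_decomposition: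
  assumes "finite S" "\<sigma> permutes S" "evenperm \<sigma>"
  shows "\<exists>ts. \<sigma> = foldr (\<circ>) (map three_cycle ts) id
      \<and> (\<forall>(a, b, c) \<in> set ts. distinct [a, b, c] \<and> {a, b, c} \<subseteq> S)
      \<and> distinct (map (\<lambda>(a, b, c). b) ts)"
  using assms
proof (induction S arbitrary: \<sigma> rule: finite_induct)
  case empty
  then show ?case by (intro exI[of _ "[]"]) simp
next
  case (insert x F)
  show ?case
  proof (cases "\<sigma> x = x")
    case True
    from insert.IH[OF permutes_insert_fixed[OF insert.prems(1) True] insert.prems(2)]
    obtain ts where ts: "\<sigma> = foldr (\<circ>) (map three_cycle ts) id"
      "\<forall>(a, b, c) \<in> set ts. distinct [a, b, c] \<and> {a, b, c} \<subseteq> F"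
      "distinct (map (\<lambda>(a, b, c). b) ts)"
      by blast
    moreover have "\<forall>(a, b, c) \<in> set ts. distinct [a, b, c] \<and> {a, b, c} \<subseteq> insert x F"
      using ts(2) by auto
    ultimately show ?thesis
      by blast
  next
    case False
    define j where "j = \<sigma> x"
    have j: "j \<in> F"
      using permutes_in_image[OF insert.prems(1), of x] False j_def by auto
    have "F \<noteq> {j}"
    proof
      assume "F = {j}"
      then have "\<sigma> = transpose x j"
        using insert.prems(1) permutes_doubleton_iff[of \<sigma> x j] False j_def by auto
      then show False
        using insert.prems(2) False j_def evenperm_swap by metis
    qed
    then obtain l where l: "l \<in> F" "l \<noteq> j"
      using j by blast
    define g where "g = three_cycle (l, x, j)"
    have dg: "distinct [l, x, j]"
      using l j insert.hyps(2) by auto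
    have gx: "g x = j"
      using cycle_of_list_next[of "[l]" x j "[]"] dg by (simp add: g_def)
    have gp: "g permutes insert x F"
      unfolding g_def three_cycle.simps
      by (rule permutes_subset[OF cycle_permutes]) (use l j in auto)
    have perm_g: "permutation g" and perm_\<sigma>: "permutation \<sigma>"
      using insert.hyps(1) permutes_imp_permutation gp insert.prems(1) by blast+
    have even_g: "evenperm g"
      using evenperm_cycle_of_list[OF dg] by (simp add: g_def)
    define \<sigma>' where "\<sigma>' = inv g \<circ> \<sigma>"
    have "\<sigma>' permutes insert x F"
      unfolding \<sigma>'_def by (rule permutes_compose[OF insert.prems(1) permutes_inv[OF gp]])
    moreover have "\<sigma>' x = x"
      using gx j_def permutes_inv_eq[OF gp] by (simp add: \<sigma>'_def)
    moreover have "evenperm \<sigma>'"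
      using evenperm_comp[OF permutation_inverse[OF perm_g] perm_\<sigma>] evenperm_inv[OF perm_g]
        even_g insert.prems(2)
      by (simp add: \<sigma>'_def)
    ultimately have "\<sigma>' permutes F" "evenperm \<sigma>'"
      by (simp_all add: permutes_insert_fixed)
    from insert.IH[OF this]
    obtain ts where ts: "\<sigma>' = foldr (\<circ>) (map three_cycle ts) id"
      "\<forall>(a, b, c) \<in> set ts. distinct [a, b, c] \<and> {a, b, c} \<subseteq> F"
      "distinct (map (\<lambda>(a, b, c). b) ts)"
      by blast
    have "\<sigma> = g \<circ> \<sigma>'"
      by (simp add: \<sigma>'_def o_assoc permutes_inv_o(1)[OF gp])
    then have "\<sigma> = foldr (\<circ>) (map three_cycle ((l, x, j) # ts)) id"
      by (simp add: ts(1) g_def)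
    moreover have "\<forall>(a, b, c) \<in> set ((l, x, j) # ts). distinct [a, b, c] \<and> {a, b, c} \<subseteq> insert x F"
      using ts(2) dg l j by auto
    moreover have "distinct (map (\<lambda>(a, b, c). b) ((l, x, j) # ts))"
      using ts(2,3) insert.hyps(2) by auto
    ultimately show ?thesis by blast
  qed
qed

fun fwd_cycle :: "'a list \<Rightarrow> 'a \<times> 'a \<times> 'a \<Rightarrow> 'a \<Rightarrow> 'a" where
  "fwd_cycle xs (a, b, c) = cycle_of_list (a # c # b # xs)"

fun bwd_cycle :: "'a list \<Rightarrow> 'a \<times> 'a \<times> 'a \<Rightarrow> 'a \<Rightarrow> 'a" where
  "bwd_cycle xs (a, b, c) = cycle_of_list (a # c # rev xs @ [b])"

lemma fwd_bwd_cycle_apply: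
  assumes "distinct (a # b # c # xs)" "xs \<noteq> []"
  shows "fwd_cycle xs (a, b, c) a = c" "fwd_cycle xs (a, b, c) c = b"
    "fwd_cycle xs (a, b, c) b = hd xs" "fwd_cycle xs (a, b, c) (last xs) = a"
    "bwd_cycle xs (a, b, c) a = c" "bwd_cycle xs (a, b, c) b = a"
    "bwd_cycle xs (a, b, c) c = last xs" "bwd_cycle xs (a, b, c) (hd xs) = b"
proof -
  obtain y ys where y: "xs = y # ys"
    using assms(2) by (cases xs) auto
  obtain zs z where z: "xs = zs @ [z]"
    using assms(2) by (cases xs rule: rev_cases) auto
  show "fwd_cycle xs (a, b, c) a = c" "fwd_cycle xs (a, b, c) c = b"
    "bwd_cycle xs (a, b, c) a = c" "bwd_cycle xs (a, b, c) b = a"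
    using cycle_of_list_next[of "[]" a c "b # xs"]
      cycle_of_list_next[of "[a]" c b xs]
      cycle_of_list_next[of "[]" a c "rev xs @ [b]"]
      cycle_of_list_last[of a "c # rev xs" b] assms(1)
    by auto
  show "fwd_cycle xs (a, b, c) b = hd xs"
    using cycle_of_list_next[of "[a, c]" b y ys] assms(1) y by auto
  show "fwd_cycle xs (a, b, c) (last xs) = a"
    using cycle_of_list_last[of a "c # b # zs" z] assms(1) z by auto
  show "bwd_cycle xs (a, b, c) c = last xs"
    using cycle_of_list_next[of "[a]" c z "rev zs @ [b]"] assms(1) z by auto
  show "bwd_cycle xs (a, b, c) (hd xs) = b"
    using cycle_of_list_next[of "a # c # rev ys" y b "[]"] assms(1) y by auto
qed

lemma fwd_bwd_cycle_shift:
  assumes "distinct (a # b # c # us @ u # v # ws)"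
  shows "fwd_cycle (us @ u # v # ws) (a, b, c) u = v"
    and "bwd_cycle (us @ u # v # ws) (a, b, c) v = u"
  using cycle_of_list_next[of "a # c # b # us" u v ws]
    cycle_of_list_next[of "a # c # rev ws" v u "rev us @ [b]"] assms
  by auto

lemma in_set_not_hd_decomp:
  assumes "x \<in> set xs" "x \<noteq> hd xs"
  obtains us u ws where "xs = us @ u # x # ws"
proof -
  obtain ys ws where xs: "xs = ys @ x # ws"
    using split_list[OF assms(1)] by blast
  then show ?thesis
  proof (cases ys rule: rev_cases)
    case Nil
    then show ?thesis using xs assms(2) by simp
  next
    case (snoc us u)
    then show ?thesis using xs that by simp
  qed
qed

lemma fwd_comp_bwd_cycle:
  assumes "distinct (a # b # c # xs)" "xs \<noteq> []"
  shows "fwd_cycle xs (a, b, c) \<circ> bwd_cycle xs (a, b, c) = three_cycle (a, b, c)"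
proof
  fix x
  note vals = fwd_bwd_cycle_apply[OF assms]
  have three: "three_cycle (a, b, c) a = b" "three_cycle (a, b, c) b = c"
    "three_cycle (a, b, c) c = a"
    using cycle_of_list_next[of "[]" a b "[c]"]
      cycle_of_list_next[of "[a]" b c "[]"] cycle_of_list_last[of a "[b]" c]
      assms(1)
    by auto
  consider "x \<in> {a, b, c}" | "x = hd xs" | "x \<in> set xs" "x \<noteq> hd xs" | "x \<notin> set (a # b # c # xs)"
    by auto
  then show "(fwd_cycle xs (a, b, c) \<circ> bwd_cycle xs (a, b, c)) x = three_cycle (a, b, c) x"
  proof cases
    case 1
    then show ?thesis using vals three by auto
  next
    case 2
    moreover have "hd xs \<notin> {a, b, c}"
      using assms by (cases xs) auto
    ultimately show ?thesis
      using vals id_outside_supp[of x "[a, b, c]"] by simp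
  next
    case 3
    then obtain us u ws where xs: "xs = us @ u # x # ws"
      by (rule in_set_not_hd_decomp)
    have "x \<notin> {a, b, c}"
      using 3 assms(1) by auto
    then show ?thesis
      using fwd_bwd_cycle_shift[of a b c us u x ws] assms(1) id_outside_supp[of x "[a, b, c]"]
      unfolding xs by simp
  next
    case 4
    then show ?thesis
      using id_outside_supp[of x] by (simp add: set_rev)
  qed
qed

lemma cycle_of_list_moves:
  assumes "distinct cs" "2 \<le> length cs" "x \<in> set cs"
  shows "cycle_of_list cs x \<noteq> x"
proof -
  obtain i where i: "i < length cs" "x = cs ! i"
    using assms(3) by (metis in_set_conv_nth)
  have "Suc i mod length cs \<noteq> i"
    using i(1) assms(2) by (cases "Suc i = length cs") auto
  moreover have "Suc i mod length cs < length cs"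
    by (rule mod_less_divisor) (use assms(2) in linarith)
  ultimately have "cs ! (Suc i mod length cs) \<noteq> cs ! i"
    using nth_eq_iff_index_eq[OF assms(1) _ i(1)] by simp
  then show ?thesis
    using cycle_of_list_nth[OF assms(1) i(1)] i(2) by simp
qed

lemma distinct_concat_map_pair:
  assumes "distinct xs" "inj_on f (set xs)" "inj_on g (set xs)" "f ` set xs \<inter> g ` set xs = {}"
  shows "distinct (concat (map (\<lambda>x. [f x, g x]) xs))"
  using assms
proof (induction xs)
  case Nil
  then show ?case by simp
next
  case (Cons x xs)
  then have "distinct (concat (map (\<lambda>x. [f x, g x]) xs))"
    by (auto intro: inj_on_subset)
  moreover have "f x \<notin> set (concat (map (\<lambda>x. [f x, g x]) xs))"
    and "g x \<notin> set (concat (map (\<lambda>x. [f x, g x]) xs))"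
    and "f x \<noteq> g x"
    using Cons.prems by (auto simp: inj_on_def)
  ultimately show ?case
    by simp
qed

definition lifted_factors :: "'a list \<Rightarrow> ('a \<times> 'a \<times> 'a) list \<Rightarrow> ('a \<Rightarrow> 'a) list" where
  "lifted_factors xs ts = concat (map (\<lambda>t. [fwd_cycle xs t, bwd_cycle xs t]) ts)"

lemma foldr_lifted_factors:
  assumes "xs \<noteq> []" "\<forall>(a, b, c) \<in> set ts. distinct (a # b # c # xs)"
  shows "foldr (\<circ>) (lifted_factors xs ts) id = foldr (\<circ>) (map three_cycle ts) id"
  using assms(2)
proof (induction ts)
  case Nil
  then show ?case by (simp add: lifted_factors_def)
next
  case (Cons t ts)
  have tail_fresh: "\<forall>(a, b, c) \<in> set ts. distinct (a # b # c # xs)"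
    using Cons.prems by simp
  have factor: "fwd_cycle xs t \<circ> bwd_cycle xs t = three_cycle t"
    using fwd_comp_bwd_cycle[OF _ assms(1)] Cons.prems by (cases t) simp
  have "foldr (\<circ>) (lifted_factors xs (t # ts)) id
      = fwd_cycle xs t \<circ> (bwd_cycle xs t \<circ> foldr (\<circ>) (lifted_factors xs ts) id)"
    by (simp add: lifted_factors_def)
  also have "\<dots> = three_cycle t \<circ> foldr (\<circ>) (map three_cycle ts) id"
    using Cons.IH[OF tail_fresh] by (simp only: o_assoc factor)
  also have "\<dots> = foldr (\<circ>) (map three_cycle (t # ts)) id"
    by simp
  finally show ?case .
qed

lemma lifted_factor_cycle:
  assumes "xs \<noteq> []" "\<forall>(a, b, c) \<in> set ts. distinct (a # b # c # xs)"
    and "\<tau> \<in> set (lifted_factors xs ts)"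
  shows "\<exists>(a, b, c) \<in> set ts. \<exists>cs. \<tau> = cycle_of_list cs \<and> distinct cs
    \<and> length cs = length xs + 3 \<and> set cs = {a, b, c} \<union> set xs \<and> \<tau> (hd xs) \<noteq> hd xs"
proof -
  obtain a b c where t: "(a, b, c) \<in> set ts"
    and \<tau>: "\<tau> = fwd_cycle xs (a, b, c) \<or> \<tau> = bwd_cycle xs (a, b, c)"
    using assms(3) by (auto simp: lifted_factors_def)
  have d: "distinct (a # b # c # xs)"
    using assms(2) t by auto
  have "\<exists>cs. \<tau> = cycle_of_list cs \<and> distinct cs \<and> length cs = length xs + 3
      \<and> set cs = {a, b, c} \<union> set xs"
  proof (cases "\<tau> = fwd_cycle xs (a, b, c)")
    case True
    then show ?thesis using d by (intro exI[of _ "a # c # b # xs"]) auto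
  next
    case False
    then show ?thesis using \<tau> d by (intro exI[of _ "a # c # rev xs @ [b]"]) auto
  qed
  then obtain cs where cs: "\<tau> = cycle_of_list cs" "distinct cs" "length cs = length xs + 3"
    "set cs = {a, b, c} \<union> set xs"
    by blast
  moreover have "\<tau> (hd xs) \<noteq> hd xs"
    using cycle_of_list_moves[of cs "hd xs"] cs assms(1) by simp
  ultimately show ?thesis
    using t by blast
qed

lemma inj_fwd_cycle: "inj (fwd_cycle xs t)"
  by (cases t) (simp only: fwd_cycle.simps permutes_inj[OF cycle_permutes])

declare fwd_cycle.simps [simp del] bwd_cycle.simps [simp del]

context
  fixes x\<^sub>1 x\<^sub>2 :: 'a and xs :: "'a list" and ts :: "('a \<times> 'a \<times> 'a) list"
  assumes triples_fresh: "\<forall>(a, b, c) \<in> set ts. distinct (a # b # c # x\<^sub>1 # x\<^sub>2 # xs)"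
    and middles_distinct: "distinct (map (\<lambda>(a, b, c). b) ts)"
begin

lemma same_middle:
  assumes "(a, b, c) \<in> set ts" "(a', b, c') \<in> set ts"
  shows "a = a' \<and> c = c'"
proof -
  have "inj_on (\<lambda>(a, b, c). b) (set ts)"
    using middles_distinct by (simp add: distinct_map)
  from inj_onD[OF this _ assms] show ?thesis
    by simp
qed

lemma lifted_cycle_points:
  assumes "(a, b, c) \<in> set ts"
  shows "fwd_cycle (x\<^sub>1 # x\<^sub>2 # xs) (a, b, c) x\<^sub>1 = x\<^sub>2"
    "fwd_cycle (x\<^sub>1 # x\<^sub>2 # xs) (a, b, c) b = x\<^sub>1"
    "fwd_cycle (x\<^sub>1 # x\<^sub>2 # xs) (a, b, c) c = b"
    "bwd_cycle (x\<^sub>1 # x\<^sub>2 # xs) (a, b, c) x\<^sub>2 = x\<^sub>1"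
    "bwd_cycle (x\<^sub>1 # x\<^sub>2 # xs) (a, b, c) x\<^sub>1 = b"
    "bwd_cycle (x\<^sub>1 # x\<^sub>2 # xs) (a, b, c) a = c"
    "bwd_cycle (x\<^sub>1 # x\<^sub>2 # xs) (a, b, c) b = a"
proof -
  have d: "distinct (a # b # c # x\<^sub>1 # x\<^sub>2 # xs)"
    using triples_fresh assms by auto
  show "fwd_cycle (x\<^sub>1 # x\<^sub>2 # xs) (a, b, c) x\<^sub>1 = x\<^sub>2"
    "bwd_cycle (x\<^sub>1 # x\<^sub>2 # xs) (a, b, c) x\<^sub>2 = x\<^sub>1"
    using fwd_bwd_cycle_shift[of a b c "[]" x\<^sub>1 x\<^sub>2 xs] d by simp_all
  show "fwd_cycle (x\<^sub>1 # x\<^sub>2 # xs) (a, b, c) b = x\<^sub>1"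
    "fwd_cycle (x\<^sub>1 # x\<^sub>2 # xs) (a, b, c) c = b"
    "bwd_cycle (x\<^sub>1 # x\<^sub>2 # xs) (a, b, c) x\<^sub>1 = b"
    "bwd_cycle (x\<^sub>1 # x\<^sub>2 # xs) (a, b, c) a = c"
    "bwd_cycle (x\<^sub>1 # x\<^sub>2 # xs) (a, b, c) b = a"
    using fwd_bwd_cycle_apply[OF d] by simp_all
qed

lemma lifted_cycles_not_inverse:
  assumes "(a, b, c) \<in> set ts" "(a', b', c') \<in> set ts"
  shows "fwd_cycle (x\<^sub>1 # x\<^sub>2 # xs) (a, b, c) \<circ> bwd_cycle (x\<^sub>1 # x\<^sub>2 # xs) (a', b', c') \<noteq> id"
    and "bwd_cycle (x\<^sub>1 # x\<^sub>2 # xs) (a', b', c') \<circ> fwd_cycle (x\<^sub>1 # x\<^sub>2 # xs) (a, b, c) \<noteq> id"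
proof -
  let ?F = "fwd_cycle (x\<^sub>1 # x\<^sub>2 # xs) (a, b, c)"
  let ?B = "bwd_cycle (x\<^sub>1 # x\<^sub>2 # xs) (a', b', c')"
  note pts = lifted_cycle_points[OF assms(1)] and pts' = lifted_cycle_points[OF assms(2)]
  have "a \<noteq> b" "b \<noteq> c"
    using triples_fresh assms(1) by auto
  show "?F \<circ> ?B \<noteq> id"
  proof
    assume inverse: "?F \<circ> ?B = id"
    have "?F b' = ?F b"
      using fun_cong[OF inverse, of x\<^sub>1] pts(2) pts'(5) by (metis comp_apply id_apply)
    then have "b' = b"
      by (rule injD[OF inj_fwd_cycle])
    then have "?F (?B a) = b"
      using same_middle[OF assms(1)] assms(2) pts pts' by auto
    then show False
      using fun_cong[OF inverse, of a] \<open>a \<noteq> b\<close> by simp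
  qed
  show "?B \<circ> ?F \<noteq> id"
  proof
    assume inverse: "?B \<circ> ?F = id"
    then have "b' = b"
      using fun_cong[OF inverse, of b] pts(2) pts'(5) by (metis comp_apply id_apply)
    then have "?B (?F c) = a"
      using same_middle[OF assms(1)] assms(2) pts pts' by auto
    then show False
      using fun_cong[OF inverse, of c] \<open>b \<noteq> c\<close> \<open>a \<noteq> b\<close> triples_fresh assms(1) by auto
  qed
qed

lemma distinct_lifted_factors: "distinct (lifted_factors (x\<^sub>1 # x\<^sub>2 # xs) ts)"
  unfolding lifted_factors_def
proof (rule distinct_concat_map_pair)
  show "distinct ts"
    using middles_distinct by (simp add: distinct_map)
  show "inj_on (fwd_cycle (x\<^sub>1 # x\<^sub>2 # xs)) (set ts)"
  proof (rule inj_onI)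
    fix t t' assume t: "t \<in> set ts" "t' \<in> set ts"
      and eq: "fwd_cycle (x\<^sub>1 # x\<^sub>2 # xs) t = fwd_cycle (x\<^sub>1 # x\<^sub>2 # xs) t'"
    obtain a b c a' b' c' where tt: "t = (a, b, c)" "t' = (a', b', c')"
      by (cases t, cases t')
    have "fwd_cycle (x\<^sub>1 # x\<^sub>2 # xs) t b' = fwd_cycle (x\<^sub>1 # x\<^sub>2 # xs) t b"
      using eq lifted_cycle_points(2) t unfolding tt by metis
    then have "b' = b"
      by (rule injD[OF inj_fwd_cycle])
    then show "t = t'"
      using same_middle t unfolding tt by auto
  qed
  show "inj_on (bwd_cycle (x\<^sub>1 # x\<^sub>2 # xs)) (set ts)"
  proof (rule inj_onI)
    fix t t' assume t: "t \<in> set ts" "t' \<in> set ts"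
      and eq: "bwd_cycle (x\<^sub>1 # x\<^sub>2 # xs) t = bwd_cycle (x\<^sub>1 # x\<^sub>2 # xs) t'"
    obtain a b c a' b' c' where tt: "t = (a, b, c)" "t' = (a', b', c')"
      by (cases t, cases t')
    have "b = b'"
      using eq lifted_cycle_points(5) t unfolding tt by metis
    then show "t = t'"
      using same_middle t unfolding tt by auto
  qed
  show "fwd_cycle (x\<^sub>1 # x\<^sub>2 # xs) ` set ts \<inter> bwd_cycle (x\<^sub>1 # x\<^sub>2 # xs) ` set ts = {}"
  proof -
    have "fwd_cycle (x\<^sub>1 # x\<^sub>2 # xs) (a, b, c) \<noteq> bwd_cycle (x\<^sub>1 # x\<^sub>2 # xs) (a', b', c')"
      if t: "(a, b, c) \<in> set ts" "(a', b', c') \<in> set ts" for a b c a' b' c'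
    proof
      assume "fwd_cycle (x\<^sub>1 # x\<^sub>2 # xs) (a, b, c) = bwd_cycle (x\<^sub>1 # x\<^sub>2 # xs) (a', b', c')"
      then have "b' = x\<^sub>2"
        using lifted_cycle_points(1)[OF t(1)] lifted_cycle_points(5)[OF t(2)] by metis
      then show False
        using triples_fresh t(2) by auto
    qed
    then show ?thesis
      by (auto simp: split_paired_all)
  qed
qed

lemma cyc_gen_fwd_cycle:
  assumes "\<tau> \<in> set (lifted_factors (x\<^sub>1 # x\<^sub>2 # xs) ts)" "(a, b, c) \<in> set ts"
    and "\<tau> \<in> cyc_gen (fwd_cycle (x\<^sub>1 # x\<^sub>2 # xs) (a, b, c))"
  shows "\<tau> = fwd_cycle (x\<^sub>1 # x\<^sub>2 # xs) (a, b, c)"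
proof -
  let ?cs = "a # c # b # x\<^sub>1 # x\<^sub>2 # xs"
  have cs: "distinct ?cs" "fwd_cycle (x\<^sub>1 # x\<^sub>2 # xs) (a, b, c) = cycle_of_list ?cs"
    using triples_fresh assms(2) by (auto simp: fwd_cycle.simps)
  note pts = lifted_cycle_points[OF assms(2)]
  obtain a' b' c' where t': "(a', b', c') \<in> set ts" and \<tau>:
    "\<tau> = fwd_cycle (x\<^sub>1 # x\<^sub>2 # xs) (a', b', c') \<or> \<tau> = bwd_cycle (x\<^sub>1 # x\<^sub>2 # xs) (a', b', c')"
    using assms(1) by (auto simp: lifted_factors_def)
  from \<tau> show ?thesis
  proof
    assume "\<tau> = fwd_cycle (x\<^sub>1 # x\<^sub>2 # xs) (a', b', c')"
    then have "\<tau> x\<^sub>1 = cycle_of_list ?cs x\<^sub>1"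
      using lifted_cycle_points(1)[OF t'] pts(1) cs(2) by simp
    moreover have "cycle_of_list ?cs x\<^sub>1 \<noteq> x\<^sub>1"
      using pts(1) cs(1) unfolding cs(2)[symmetric] by auto
    ultimately show ?thesis
      using cyc_gen_cycle_of_list_agree[OF cs(1) assms(3)[unfolded cs(2)]] cs(2) by simp
  next
    assume "\<tau> = bwd_cycle (x\<^sub>1 # x\<^sub>2 # xs) (a', b', c')"
    moreover have "cycle_of_list ?cs (\<tau> x\<^sub>2) = x\<^sub>2"
      using calculation lifted_cycle_points(4)[OF t'] pts(1) cs(2) by simp
    then have "cycle_of_list ?cs \<circ> \<tau> = id"
      using cyc_gen_cycle_of_list_inverse[OF cs(1) assms(3)[unfolded cs(2)], of x\<^sub>2] by simp
    ultimately show ?thesis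
      using lifted_cycles_not_inverse(1)[OF assms(2) t'] cs(2) by simp
  qed
qed

lemma cyc_gen_bwd_cycle:
  assumes "\<tau> \<in> set (lifted_factors (x\<^sub>1 # x\<^sub>2 # xs) ts)" "(a, b, c) \<in> set ts"
    and "\<tau> \<in> cyc_gen (bwd_cycle (x\<^sub>1 # x\<^sub>2 # xs) (a, b, c))"
  shows "\<tau> = bwd_cycle (x\<^sub>1 # x\<^sub>2 # xs) (a, b, c)"
proof -
  let ?cs = "a # c # rev (x\<^sub>1 # x\<^sub>2 # xs) @ [b]"
  have cs: "distinct ?cs" "bwd_cycle (x\<^sub>1 # x\<^sub>2 # xs) (a, b, c) = cycle_of_list ?cs"
    using triples_fresh assms(2) by (auto simp: bwd_cycle.simps)
  note pts = lifted_cycle_points[OF assms(2)]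
  obtain a' b' c' where t': "(a', b', c') \<in> set ts" and \<tau>:
    "\<tau> = fwd_cycle (x\<^sub>1 # x\<^sub>2 # xs) (a', b', c') \<or> \<tau> = bwd_cycle (x\<^sub>1 # x\<^sub>2 # xs) (a', b', c')"
    using assms(1) by (auto simp: lifted_factors_def)
  from \<tau> show ?thesis
  proof
    assume "\<tau> = fwd_cycle (x\<^sub>1 # x\<^sub>2 # xs) (a', b', c')"
    moreover have "cycle_of_list ?cs (\<tau> x\<^sub>1) = x\<^sub>1"
      using calculation lifted_cycle_points(1)[OF t'] pts(4) cs(2) by simp
    then have "cycle_of_list ?cs \<circ> \<tau> = id"
      using cyc_gen_cycle_of_list_inverse[OF cs(1) assms(3)[unfolded cs(2)], of x\<^sub>1] by simp
    ultimately show ?thesis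
      using lifted_cycles_not_inverse(2)[OF t' assms(2)] cs(2) by simp
  next
    assume "\<tau> = bwd_cycle (x\<^sub>1 # x\<^sub>2 # xs) (a', b', c')"
    then have "\<tau> x\<^sub>2 = cycle_of_list ?cs x\<^sub>2"
      using lifted_cycle_points(4)[OF t'] pts(4) cs(2) by simp
    moreover have "cycle_of_list ?cs x\<^sub>2 \<noteq> x\<^sub>2"
      using pts(4) cs(1) unfolding cs(2)[symmetric] by auto
    ultimately show ?thesis
      using cyc_gen_cycle_of_list_agree[OF cs(1) assms(3)[unfolded cs(2)]] cs(2) by simp
  qed
qed

lemma lifted_factors_cyc_gen:
  assumes "\<tau> \<in> set (lifted_factors (x\<^sub>1 # x\<^sub>2 # xs) ts)"
    and "\<tau>' \<in> set (lifted_factors (x\<^sub>1 # x\<^sub>2 # xs) ts)" "\<tau> \<in> cyc_gen \<tau>'"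
  shows "\<tau> = \<tau>'"
proof -
  obtain a b c where "(a, b, c) \<in> set ts"
    "\<tau>' = fwd_cycle (x\<^sub>1 # x\<^sub>2 # xs) (a, b, c) \<or> \<tau>' = bwd_cycle (x\<^sub>1 # x\<^sub>2 # xs) (a, b, c)"
    using assms(2) by (auto simp: lifted_factors_def)
  then show ?thesis
    using cyc_gen_fwd_cycle cyc_gen_bwd_cycle assms(1,3) by blast
qed

end

lemma cycle_of_list_in_alt:
  assumes "distinct cs" "odd (length cs)" "set cs \<subseteq> S"
  shows "cycle_of_list cs \<in> alt S"
  using evenperm_cycle_of_list[OF assms(1)] assms(2) permutes_subset[OF cycle_permutes assms(3)]
  by (auto simp: alt_def)

lemma lifted_factor_in_alt:
  assumes "xs \<noteq> []" "even (length xs)" "hd xs \<notin> S"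
    and "\<forall>(a, b, c) \<in> set ts. distinct (a # b # c # xs) \<and> {a, b, c} \<subseteq> S"
    and "\<tau> \<in> set (lifted_factors xs ts)"
  shows "is_k_cycle (length xs + 3) \<tau> \<and> \<tau> \<in> alt (S \<union> set xs) - alt S"
proof -
  have "\<forall>(a, b, c) \<in> set ts. distinct (a # b # c # xs)"
    using assms(4) by auto
  from lifted_factor_cycle[OF assms(1) this assms(5)]
  obtain a b c cs where t: "(a, b, c) \<in> set ts" and cs: "\<tau> = cycle_of_list cs" "distinct cs"
    "length cs = length xs + 3" "set cs = {a, b, c} \<union> set xs" "\<tau> (hd xs) \<noteq> hd xs"
    by blast
  have "is_k_cycle (length xs + 3) \<tau>"
    using cs unfolding is_k_cycle_def by blast
  moreover have "\<tau> \<in> alt (S \<union> set xs)"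
    using cycle_of_list_in_alt[OF cs(2)] cs assms(2,4) t by auto
  moreover have "\<tau> \<notin> alt S"
    using cs(5) assms(3) by (auto simp: alt_def permutes_not_in)
  ultimately show ?thesis
    by blast
qed

lemma inv_in_alt:
  assumes "finite S" "\<sigma> \<in> alt S"
  shows "inv \<sigma> \<in> alt S"
proof -
  have "\<sigma> permutes S" "evenperm \<sigma>"
    using assms(2) by (auto simp: alt_def)
  then show ?thesis
    using permutes_inv evenperm_inv[OF permutes_imp_permutation[OF assms(1)]] by (simp add: alt_def)
qed

lemma alt_product_of_lifted_cycles:
  assumes "finite S" "\<sigma> \<in> alt S"
    and "distinct (x\<^sub>1 # x\<^sub>2 # xs)" "set (x\<^sub>1 # x\<^sub>2 # xs) \<inter> S = {}" "even (length xs)"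
  shows "\<exists>L. \<sigma> = foldr (\<circ>) L id
    \<and> (\<forall>\<tau> \<in> set L. is_k_cycle (length xs + 5) \<tau> \<and> \<tau> \<in> alt (S \<union> set (x\<^sub>1 # x\<^sub>2 # xs)) - alt S)
    \<and> (\<forall>i < length L. \<forall>j < length L. i \<noteq> j \<longrightarrow> L ! i \<notin> cyc_gen (L ! j))"
proof -
  have "\<sigma> permutes S" "evenperm \<sigma>"
    using assms(2) by (auto simp: alt_def)
  then obtain ts where ts: "\<sigma> = foldr (\<circ>) (map three_cycle ts) id"
    "\<forall>(a, b, c) \<in> set ts. distinct [a, b, c] \<and> {a, b, c} \<subseteq> S"
    "distinct (map (\<lambda>(a, b, c). b) ts)"
    using evenperm_three_cycle_decomposition[OF assms(1)] by blast
  have fresh: "\<forall>(a, b, c) \<in> set ts. distinct (a # b # c # x\<^sub>1 # x\<^sub>2 # xs) \<and> {a, b, c} \<subseteq> S"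
    using ts(2) assms(3,4) by auto
  then have fresh': "\<forall>(a, b, c) \<in> set ts. distinct (a # b # c # x\<^sub>1 # x\<^sub>2 # xs)"
    by fast
  let ?L = "lifted_factors (x\<^sub>1 # x\<^sub>2 # xs) ts"
  have len: "length (x\<^sub>1 # x\<^sub>2 # xs) + 3 = length xs + 5"
    by simp
  have "\<sigma> = foldr (\<circ>) ?L id"
    using foldr_lifted_factors[OF _ fresh'] ts(1) by simp
  moreover have "\<forall>\<tau> \<in> set ?L. is_k_cycle (length xs + 5) \<tau>
      \<and> \<tau> \<in> alt (S \<union> set (x\<^sub>1 # x\<^sub>2 # xs)) - alt S"
    using lifted_factor_in_alt[of "x\<^sub>1 # x\<^sub>2 # xs" S ts, unfolded len] fresh assms(4,5) by auto
  moreover have "distinct ?L"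
    by (rule distinct_lifted_factors[OF fresh' ts(3)])
  moreover have "\<tau> = \<tau>'" if "\<tau> \<in> set ?L" "\<tau>' \<in> set ?L" "\<tau> \<in> cyc_gen \<tau>'" for \<tau> \<tau>'
    using lifted_factors_cyc_gen[OF fresh' ts(3) that] .
  ultimately show ?thesis
    by (intro exI[of _ ?L]) (metis nth_eq_iff_index_eq nth_mem)
qed

theorem mainTheorem8:
  fixes n p :: nat and \<sigma> :: "nat \<Rightarrow> nat"
  assumes "prime p" and "p > 3" and "n > 2"
    and "\<sigma> \<in> alt {1..n}"
  shows "\<exists>ts :: (nat \<Rightarrow> nat) list.
           inv \<sigma> = foldr (\<circ>) ts id
         \<and> (\<forall>\<tau> \<in> set ts. is_k_cycle p \<tau> \<and> \<tau> \<in> alt {1..n + (p - 3)} - alt {1..n})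
         \<and> (\<forall>i < length ts. \<forall>j < length ts. i \<noteq> j \<longrightarrow> ts ! i \<notin> cyc_gen (ts ! j))"
proof -
  have "odd p"
    using prime_odd_nat[OF assms(1)] assms(2) by simp
  then have p: "5 \<le> p" "even (p - 5)"
    using assms(2) by presburger+
  define xs where "xs = [n + 3..<Suc n + (p - 3)]"
  have new: "Suc n # Suc (Suc n) # xs = [Suc n..<Suc n + (p - 3)]"
    using p(1) by (simp add: xs_def upt_conv_Cons numeral_3_eq_3 del: upt_Suc)
  have "length xs + 5 = p" "even (length xs)"
    using p by (simp_all add: xs_def del: upt_Suc)
  moreover have "{1..n} \<union> set (Suc n # Suc (Suc n) # xs) = {1..n + (p - 3)}"
    "distinct (Suc n # Suc (Suc n) # xs)" "set (Suc n # Suc (Suc n) # xs) \<inter> {1..n} = {}"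
    using p(1) unfolding new by auto
  ultimately show ?thesis
    using alt_product_of_lifted_cycles[OF finite_atLeastAtMost inv_in_alt[OF _ assms(4)],
        of "Suc n" "Suc (Suc n)" xs]
    by simp
qed

end
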